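(* Let $G$ be a simple connected bipartite graph on $n\ge 3$ vertices with maximum degree $\Delta\le n-2$, and let $S=\sum_{j=1}^{n}D_j$. Suppose $\deg(v_1)=\cdots=\deg(v_k)=\Delta$, and for $1\le i\le k$ let $a_i=(\Delta+1)(S-2D_i-2t_{v_i}\Delta)+2n\Delta^{2}$ and $b_i=D_i^{2}-2S\Delta^{2}+2D_it_{v_i}\Delta+t_{v_i}^{2}\Delta^{2}$. Then (i) $\displaystyle \rho^{\mathcal{D}}(G)\ge \max_{1\le i\le k}\frac{a_i+\sqrt{a_i^{2}+4b_i(1+\Delta)(n-\Delta-1)}}{2(1+\Delta)(n-\Delta-1)}$; (ii) $\displaystyle \rho^{\mathcal{D}}_{min}(G)\le \min_{1\le i\le k}\frac{a_i-\sqrt{a_i^{2}+4b_i(1+\Delta)(n-\Delta-1)}}{2(1+\Delta)(n-\Delta-1)}$.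
   Context: $G$ has vertex set $\{v_1,\dots,v_n\}$; $d_G(u,v)$ denotes the distance in $G$. The distance matrix is $\mathcal{D}(G)=(d_G(v_i,v_j))$. The transmission of $v_i$ is $D_i=\sum_{j\ne i}d_G(v_i,v_j)$. For a vertex $v$ of degree $d_v$, $t_v=\frac{1}{d_v}\sum_{v_j\sim v}D_j$. $\rho^{\mathcal{D}}(G)$ and $\rho^{\mathcal{D}}_{min}(G)$ are the largest and least eigenvalues of $\mathcal{D}(G)$. *)

theory Defs
  imports "Jordan_Normal_Form.Char_Poly"
begin

definition simple_graph :: "nat \<Rightarrow> (nat \<Rightarrow> nat \<Rightarrow> bool) \<Rightarrow> bool" where
  "simple_graph n E \<longleftrightarrow> (\<forall>u v. E u v \<longrightarrow> u < n \<and> v < n \<and> u \<noteq> v \<and> E v u)"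

definition is_walk :: "(nat \<Rightarrow> nat \<Rightarrow> bool) \<Rightarrow> nat list \<Rightarrow> bool" where
  "is_walk E xs \<longleftrightarrow> xs \<noteq> [] \<and> (\<forall>i. Suc i < length xs \<longrightarrow> E (xs ! i) (xs ! Suc i))"

definition connected_graph :: "nat \<Rightarrow> (nat \<Rightarrow> nat \<Rightarrow> bool) \<Rightarrow> bool" where
  "connected_graph n E \<longleftrightarrow>
     (\<forall>u<n. \<forall>v<n. \<exists>xs. is_walk E xs \<and> hd xs = u \<and> last xs = v)"

definition bipartite_graph :: "nat \<Rightarrow> (nat \<Rightarrow> nat \<Rightarrow> bool) \<Rightarrow> bool" where
  "bipartite_graph n E \<longleftrightarrow> (\<exists>A. \<forall>u<n. \<forall>v<n. E u v \<longrightarrow> (u \<in> A \<longleftrightarrow> v \<notin> A))"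

definition gdist :: "(nat \<Rightarrow> nat \<Rightarrow> bool) \<Rightarrow> nat \<Rightarrow> nat \<Rightarrow> nat" where
  "gdist E u v = (LEAST k. \<exists>xs. is_walk E xs \<and> length xs = Suc k \<and> hd xs = u \<and> last xs = v)"

definition degree :: "nat \<Rightarrow> (nat \<Rightarrow> nat \<Rightarrow> bool) \<Rightarrow> nat \<Rightarrow> nat" where
  "degree n E v = card {u. u < n \<and> E v u}"

definition max_degree :: "nat \<Rightarrow> (nat \<Rightarrow> nat \<Rightarrow> bool) \<Rightarrow> nat" where
  "max_degree n E = Max (degree n E ` {0..<n})"

text \<open>Transmission D_v = sum of distances from v.\<close>
definition transmission :: "nat \<Rightarrow> (nat \<Rightarrow> nat \<Rightarrow> bool) \<Rightarrow> nat \<Rightarrow> real" where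
  "transmission n E v = (\<Sum>j\<in>{0..<n} - {v}. real (gdist E v j))"

definition tval :: "nat \<Rightarrow> (nat \<Rightarrow> nat \<Rightarrow> bool) \<Rightarrow> nat \<Rightarrow> real" where
  "tval n E v = (\<Sum>u\<in>{u. u < n \<and> E v u}. transmission n E u) / real (degree n E v)"

definition dist_matrix :: "nat \<Rightarrow> (nat \<Rightarrow> nat \<Rightarrow> bool) \<Rightarrow> real mat" where
  "dist_matrix n E = mat n n (\<lambda>(i, j). real (gdist E i j))"

definition rhoD :: "nat \<Rightarrow> (nat \<Rightarrow> nat \<Rightarrow> bool) \<Rightarrow> real" where
  "rhoD n E = Max {k. eigenvalue (dist_matrix n E) k}"

definition rhoD_min :: "nat \<Rightarrow> (nat \<Rightarrow> nat \<Rightarrow> bool) \<Rightarrow> real" where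
  "rhoD_min n E = Min {k. eigenvalue (dist_matrix n E) k}"

end

theory Submission
  imports Defs "HOL-Analysis.Function_Topology"
begin

text \<open>For a symmetric matrix every Rayleigh quotient lies between the least and the largest
  eigenvalue; the maximiser of the quadratic form on the (compact) unit sphere is an eigenvector.
  Testing with vectors that are constant on \<open>X = {v} \<union> N(v)\<close> and on its complement
  reduces the distance matrix to the weighted 2x2 quotient matrix of block sums, whose two
  eigenvalues are the roots \<open>(a \<plusminus> sqrt (a\<^sup>2 + 4bc)) / 2c\<close>; both are attained
  as Rayleigh quotients, hence lie in the spectrum's range. In a bipartite graph two neighbours of
  \<open>v\<close> are at distance 2, so the block sum over \<open>X\<close> is \<open>2\<Delta>\<^sup>2\<close>, and
  the remaining block sums are given by \<open>S\<close> and \<open>D\<^sub>v + \<Delta> t\<^sub>v\<close>.\<close>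

section \<open>Rayleigh quotients of symmetric matrices\<close>

definition quad_form :: "(nat \<Rightarrow> nat \<Rightarrow> real) \<Rightarrow> nat \<Rightarrow> (nat \<Rightarrow> real) \<Rightarrow> real" where
  "quad_form a n f = (\<Sum>i<n. \<Sum>j<n. a i j * f i * f j)"

definition sq_norm :: "nat \<Rightarrow> (nat \<Rightarrow> real) \<Rightarrow> real" where
  "sq_norm n f = (\<Sum>i<n. (f i)^2)"

lemma sq_norm_nonneg: "0 \<le> sq_norm n f"
  unfolding sq_norm_def by (intro sum_nonneg) simp

lemma sq_norm_eq_0_iff: "sq_norm n f = 0 \<longleftrightarrow> (\<forall>i<n. f i = 0)"
  unfolding sq_norm_def by (subst sum_nonneg_eq_0_iff) auto

lemma quad_form_add_scaled:
  assumes a_sym: "\<And>i j. i < n \<Longrightarrow> j < n \<Longrightarrow> a i j = a j i"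
  shows "quad_form a n (\<lambda>i. g i + t * h i)
       = quad_form a n g + 2 * t * (\<Sum>i<n. \<Sum>j<n. a i j * g i * h j) + t^2 * quad_form a n h"
proof -
  have swap: "(\<Sum>i<n. \<Sum>j<n. a i j * h i * g j) = (\<Sum>i<n. \<Sum>j<n. a i j * g i * h j)"
    by (subst sum.swap) (intro sum.cong refl, simp add: a_sym mult_ac)
  have "quad_form a n (\<lambda>i. g i + t * h i) = (\<Sum>i<n. \<Sum>j<n. a i j * g i * g j
      + t * (a i j * g i * h j) + t * (a i j * h i * g j) + t^2 * (a i j * h i * h j))"
    unfolding quad_form_def by (intro sum.cong refl) (simp add: algebra_simps power2_eq_square)
  also have "\<dots> = quad_form a n g + t * (\<Sum>i<n. \<Sum>j<n. a i j * g i * h j)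
      + t * (\<Sum>i<n. \<Sum>j<n. a i j * h i * g j) + t^2 * quad_form a n h"
    unfolding quad_form_def by (simp add: sum.distrib sum_distrib_left)
  finally show ?thesis using swap by simp
qed

lemma sq_norm_add_scaled:
  "sq_norm n (\<lambda>i. g i + t * h i) = sq_norm n g + 2 * t * (\<Sum>i<n. g i * h i) + t^2 * sq_norm n h"
  unfolding sq_norm_def by (simp add: power2_eq_square algebra_simps sum.distrib sum_distrib_left)

lemma linear_coeff_eq_0_if_quadratic_nonneg:
  fixes c d :: real
  assumes "\<And>t. 0 \<le> 2 * t * c + t^2 * d"
  shows "c = 0"
proof -
  have d: "d \<ge> 0" using assms[of 1] assms[of "-1"] by simp
  have "0 \<le> 2 * (-c/(d+1)) * c + (-c/(d+1))^2 * d" by (rule assms)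
  also have "\<dots> = -(c^2 * (d + 2) / (d+1)^2)"
    using d by (simp add: divide_simps power2_eq_square) (simp add: algebra_simps)
  finally have "c^2 * (d + 2) / (d+1)^2 \<le> 0" by simp
  moreover have "c^2 * (d + 2) / (d+1)^2 \<ge> 0" using d by simp
  ultimately show ?thesis using d by (simp add: add_nonneg_eq_0_iff)
qed

lemma compact_cube_functions:
  "compact {f :: nat \<Rightarrow> real. \<forall>i. f i \<in> (if i < n then {-1..1} else {0})}"
proof -
  have eq: "{f :: nat \<Rightarrow> real. \<forall>i. f i \<in> (if i < n then {-1..1} else {0})}
      = PiE UNIV (\<lambda>i. if i < n then {-1..1::real} else {0})"
    by (auto simp: PiE_def Pi_def)
  have "compactin (product_topology (\<lambda>i. euclidean) UNIV)
      (PiE UNIV (\<lambda>i. if i < n then {-1..1::real} else {0}))"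
    by (subst compactin_PiE) auto
  then show ?thesis unfolding eq euclidean_product_topology by simp
qed

lemma rayleigh_maximizer_exists:
  assumes "n > 0"
  shows "\<exists>g. sq_norm n g = 1 \<and> (\<forall>f. quad_form a n f \<le> quad_form a n g * sq_norm n f)"
proof -
  define T where "T = {f :: nat \<Rightarrow> real. \<forall>i. f i \<in> (if i < n then {-1..1} else {0})}"
  define U where "U = T \<inter> {f. sq_norm n f = 1}"
  have "continuous_on UNIV (sq_norm n)" "continuous_on UNIV (quad_form a n)"
    unfolding sq_norm_def quad_form_def
    by (intro continuous_intros continuous_on_product_coordinates)+
  then have "closed {f. sq_norm n f = 1}" and cont: "continuous_on U (quad_form a n)"
    by (auto intro: closed_Collect_eq continuous_on_subset)
  then have "compact U" unfolding U_def T_def by (intro compact_Int_closed compact_cube_functions)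
  moreover have "(\<lambda>i. if i = 0 then 1 else 0) \<in> U"
    using assms by (simp add: U_def T_def sq_norm_def if_distrib[of "\<lambda>x. x^2"] cong: if_cong)
  ultimately obtain g where gU: "g \<in> U" and gmax: "\<forall>f\<in>U. quad_form a n f \<le> quad_form a n g"
    using continuous_attains_sup[OF _ _ cont] by blast
  have "quad_form a n f \<le> quad_form a n g * sq_norm n f" for f
  proof (cases "sq_norm n f = 0")
    case True
    then have "quad_form a n f = 0" by (simp add: sq_norm_eq_0_iff quad_form_def)
    with True show ?thesis by simp
  next
    case False
    define s where "s = sqrt (sq_norm n f)"
    have pos: "sq_norm n f > 0" using False sq_norm_nonneg[of n f] by simp
    then have s: "s > 0" "s^2 = sq_norm n f" by (auto simp: s_def)
    define h where "h i = (if i < n then f i / s else 0)" for i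
    have qh: "quad_form a n h = quad_form a n f / s^2" and nh: "sq_norm n h = sq_norm n f / s^2"
      by (simp_all add: quad_form_def sq_norm_def h_def sum_divide_distrib power_divide
                        power2_eq_square)
    have "h i \<in> (if i < n then {-1..1} else {0})" for i
    proof (cases "i < n")
      case True
      have "(f i)^2 \<le> sq_norm n f" unfolding sq_norm_def by (rule member_le_sum) (use True in auto)
      then have "(h i)^2 \<le> 1^2" using s pos True by (simp add: h_def power_divide)
      then have "\<bar>h i\<bar> \<le> 1" using abs_le_square_iff[of "h i" 1] by simp
      then show ?thesis using True by (simp add: abs_le_iff)
    qed (simp add: h_def)
    then have "h \<in> U" using nh s pos by (simp add: U_def T_def)
    then have "quad_form a n f / s^2 \<le> quad_form a n g" using gmax qh by auto
    then show ?thesis using s pos by (simp add: divide_le_eq mult.commute)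
  qed
  moreover have "sq_norm n g = 1" using gU by (simp add: U_def)
  ultimately show ?thesis by blast
qed

lemma rayleigh_maximizer_is_eigenfunction:
  assumes a_sym: "\<And>i j. i < n \<Longrightarrow> j < n \<Longrightarrow> a i j = a j i"
    and g: "sq_norm n g = 1" and max: "\<And>f. quad_form a n f \<le> quad_form a n g * sq_norm n f"
    and k: "k < n"
  shows "(\<Sum>j<n. a k j * g j) = quad_form a n g * g k"
proof -
  define \<mu> where "\<mu> = quad_form a n g"
  define h where "h i = (if i = k then 1 else (0::real))" for i
  have gh: "(\<Sum>i<n. g i * h i) = g k"
    using k by (simp add: h_def if_distrib[of "\<lambda>x. _ * x"] cong: if_cong)
  have agh: "(\<Sum>i<n. \<Sum>j<n. a i j * g i * h j) = (\<Sum>j<n. a k j * g j)"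
    using k a_sym by (simp add: h_def if_distrib[of "\<lambda>x. _ * x"] cong: if_cong)
  define c where "c = \<mu> * g k - (\<Sum>j<n. a k j * g j)"
  define d where "d = \<mu> * sq_norm n h - quad_form a n h"
  have "0 \<le> 2 * t * c + t^2 * d" for t
  proof -
    have "0 \<le> \<mu> * sq_norm n (\<lambda>i. g i + t * h i) - quad_form a n (\<lambda>i. g i + t * h i)"
      using max by (simp add: \<mu>_def)
    also have "\<dots> = \<mu> * (1 + 2 * t * g k + t^2 * sq_norm n h)
        - (\<mu> + 2 * t * (\<Sum>j<n. a k j * g j) + t^2 * quad_form a n h)"
      using quad_form_add_scaled[where a=a and n=n and g=g and t=t and h=h, OF a_sym]
      by (simp add: sq_norm_add_scaled gh agh g \<mu>_def)
    also have "\<dots> = 2 * t * c + t^2 * d" by (simp add: c_def d_def algebra_simps)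
    finally show ?thesis .
  qed
  then have "c = 0" by (rule linear_coeff_eq_0_if_quadratic_nonneg)
  then show ?thesis by (simp add: c_def \<mu>_def)
qed

lemma symmetric_top_eigenfunction:
  assumes a_sym: "\<And>i j. i < n \<Longrightarrow> j < n \<Longrightarrow> a i j = a j i" and "n > 0"
  shows "\<exists>g \<mu>. (\<exists>k<n. g k \<noteq> 0) \<and> (\<forall>k<n. (\<Sum>j<n. a k j * g j) = \<mu> * g k)
           \<and> (\<forall>f. quad_form a n f \<le> \<mu> * sq_norm n f)"
proof -
  obtain g where g: "sq_norm n g = 1" and max: "\<And>f. quad_form a n f \<le> quad_form a n g * sq_norm n f"
    using rayleigh_maximizer_exists[OF \<open>n > 0\<close>] by blast
  have "\<exists>k<n. g k \<noteq> 0" using g sq_norm_eq_0_iff[of n g] by auto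
  moreover have "\<forall>k<n. (\<Sum>j<n. a k j * g j) = quad_form a n g * g k"
    using rayleigh_maximizer_is_eigenfunction[where a=a and n=n, OF a_sym g max] by blast
  ultimately show ?thesis using max by blast
qed

lemma eigenvalue_mat_if_eigenfunction:
  assumes "\<exists>k<n. g k \<noteq> 0" and eq: "\<And>k. k < n \<Longrightarrow> (\<Sum>j<n. a k j * g j) = \<mu> * g k"
  shows "eigenvalue (mat n n (\<lambda>(i, j). a i j)) \<mu>"
proof -
  have "vec n g \<noteq> 0\<^sub>v n" using assms(1) by (auto simp: vec_eq_iff)
  moreover have "mat n n (\<lambda>(i, j). a i j) *\<^sub>v vec n g = \<mu> \<cdot>\<^sub>v vec n g"
  proof (rule eq_vecI)
    fix i assume "i < dim_vec (\<mu> \<cdot>\<^sub>v vec n g)"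
    then show "(mat n n (\<lambda>(i, j). a i j) *\<^sub>v vec n g) $ i = (\<mu> \<cdot>\<^sub>v vec n g) $ i"
      using eq by (simp add: scalar_prod_def lessThan_atLeast0)
  qed simp
  ultimately show ?thesis unfolding eigenvalue_def eigenvector_def by (intro exI[of _ "vec n g"]) auto
qed

lemma finite_eigenvalues:
  assumes "(A :: 'a :: field mat) \<in> carrier_mat n n"
  shows "finite {k. eigenvalue A k}"
proof -
  have "char_poly A \<noteq> 0" using degree_monic_char_poly[OF assms] by auto
  then have "finite {k. poly (char_poly A) k = 0}" by (rule poly_roots_finite)
  then show ?thesis using eigenvalue_root_char_poly[OF assms] by simp
qed

lemma quad_form_le_max_eigenvalue:
  assumes a_sym: "\<And>i j. i < n \<Longrightarrow> j < n \<Longrightarrow> a i j = a j i" and "n > 0"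
  shows "quad_form a n f \<le> Max {k. eigenvalue (mat n n (\<lambda>(i, j). a i j)) k} * sq_norm n f"
proof -
  obtain g \<mu> where nz: "\<exists>k<n. g k \<noteq> 0" and eig: "\<forall>k<n. (\<Sum>j<n. a k j * g j) = \<mu> * g k"
    and top: "\<forall>f. quad_form a n f \<le> \<mu> * sq_norm n f"
    using symmetric_top_eigenfunction[where a=a and n=n, OF assms] by blast
  have "eigenvalue (mat n n (\<lambda>(i, j). a i j)) \<mu>"
    using nz eig by (intro eigenvalue_mat_if_eigenfunction) auto
  then have "\<mu> \<le> Max {k. eigenvalue (mat n n (\<lambda>(i, j). a i j)) k}"
    by (intro Max_ge finite_eigenvalues) auto
  with top show ?thesis by (meson mult_right_mono order_trans sq_norm_nonneg)
qed

lemma min_eigenvalue_le_quad_form: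
  assumes a_sym: "\<And>i j. i < n \<Longrightarrow> j < n \<Longrightarrow> a i j = a j i" and "n > 0"
  shows "Min {k. eigenvalue (mat n n (\<lambda>(i, j). a i j)) k} * sq_norm n f \<le> quad_form a n f"
proof -
  have "- a i j = - a j i" if "i < n" "j < n" for i j using a_sym[OF that] by simp
  then obtain g \<mu> where nz: "\<exists>k<n. g k \<noteq> 0"
    and eig: "\<forall>k<n. (\<Sum>j<n. - a k j * g j) = \<mu> * g k"
    and top: "\<forall>f. quad_form (\<lambda>i j. - a i j) n f \<le> \<mu> * sq_norm n f"
    using symmetric_top_eigenfunction[where a="\<lambda>i j. - a i j" and n=n] \<open>n > 0\<close> by blast
  have "(\<Sum>j<n. a k j * g j) = - \<mu> * g k" if "k < n" for k
    using eig that by (simp add: sum_negf minus_equation_iff[of "sum _ _"])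
  with nz have "eigenvalue (mat n n (\<lambda>(i, j). a i j)) (- \<mu>)"
    by (rule eigenvalue_mat_if_eigenfunction)
  then have "Min {k. eigenvalue (mat n n (\<lambda>(i, j). a i j)) k} \<le> - \<mu>"
    by (intro Min_le finite_eigenvalues) auto
  moreover have "- \<mu> * sq_norm n f \<le> quad_form a n f"
    using spec[OF top, of f] by (simp add: quad_form_def sum_negf)
  ultimately show ?thesis by (meson mult_right_mono order_trans sq_norm_nonneg)
qed

section \<open>Test vectors constant on the blocks of a bipartition\<close>

lemma sum_lessThan_split:
  fixes n :: nat
  assumes "X \<subseteq> {..<n}"
  shows "(\<Sum>i<n. F i) = (\<Sum>i\<in>X. F i) + (\<Sum>i\<in>{..<n} - X. F i)"
  using sum.subset_diff[OF assms finite_lessThan, of F] by (simp add: add.commute)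

lemma quad_form_two_valued:
  assumes a_sym: "\<And>i j. i < n \<Longrightarrow> j < n \<Longrightarrow> a i j = a j i" and X: "X \<subseteq> {..<n}"
  shows "quad_form a n (\<lambda>i. if i \<in> X then y1 else y2)
       = (\<Sum>i\<in>X. \<Sum>j\<in>X. a i j) * y1^2 + 2 * (\<Sum>i\<in>X. \<Sum>j\<in>{..<n} - X. a i j) * y1 * y2
         + (\<Sum>i\<in>{..<n} - X. \<Sum>j\<in>{..<n} - X. a i j) * y2^2"
proof -
  define Y where "Y = {..<n} - X"
  have swap: "(\<Sum>i\<in>Y. \<Sum>j\<in>X. a i j) = (\<Sum>i\<in>X. \<Sum>j\<in>Y. a i j)"
    using X by (subst sum.swap) (intro sum.cong refl, auto simp: Y_def intro: a_sym)
  have "quad_form a n (\<lambda>i. if i \<in> X then y1 else y2)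
      = (\<Sum>i\<in>X. (\<Sum>j\<in>X. a i j * y1 * y1) + (\<Sum>j\<in>Y. a i j * y1 * y2))
      + (\<Sum>i\<in>Y. (\<Sum>j\<in>X. a i j * y2 * y1) + (\<Sum>j\<in>Y. a i j * y2 * y2))"
    unfolding quad_form_def sum_lessThan_split[OF X] Y_def[symmetric]
    by (intro arg_cong2[where f = "(+)"] sum.cong refl) (auto simp: Y_def)
  also have "\<dots> = (\<Sum>i\<in>X. \<Sum>j\<in>X. a i j) * y1^2 + ((\<Sum>i\<in>X. \<Sum>j\<in>Y. a i j)
      + (\<Sum>i\<in>Y. \<Sum>j\<in>X. a i j)) * y1 * y2 + (\<Sum>i\<in>Y. \<Sum>j\<in>Y. a i j) * y2^2"
    by (simp add: sum.distrib sum_distrib_left power2_eq_square algebra_simps)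
  finally show ?thesis unfolding swap by (simp add: Y_def)
qed

lemma sq_norm_two_valued:
  assumes "X \<subseteq> {..<n}"
  shows "sq_norm n (\<lambda>i. if i \<in> X then y1 else y2)
       = real (card X) * y1^2 + real (n - card X) * y2^2"
proof -
  have "card ({..<n} - X) = n - card X"
    using assms by (simp add: card_Diff_subset finite_subset)
  then show ?thesis
    unfolding sq_norm_def sum_lessThan_split[OF assms] by simp
qed

lemma block_sums_by_row_sums:
  fixes a :: "nat \<Rightarrow> nat \<Rightarrow> real"
  assumes a_sym: "\<And>i j. i < n \<Longrightarrow> j < n \<Longrightarrow> a i j = a j i" and X: "X \<subseteq> {..<n}"
  shows "(\<Sum>i\<in>X. \<Sum>j\<in>{..<n} - X. a i j) = (\<Sum>i\<in>X. \<Sum>j<n. a i j) - (\<Sum>i\<in>X. \<Sum>j\<in>X. a i j)"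
    and "(\<Sum>i\<in>{..<n} - X. \<Sum>j\<in>{..<n} - X. a i j)
       = (\<Sum>i<n. \<Sum>j<n. a i j) - 2 * (\<Sum>i\<in>X. \<Sum>j<n. a i j) + (\<Sum>i\<in>X. \<Sum>j\<in>X. a i j)"
proof -
  define Y where "Y = {..<n} - X"
  have rows: "(\<Sum>j<n. a i j) = (\<Sum>j\<in>X. a i j) + (\<Sum>j\<in>Y. a i j)" for i
    unfolding Y_def by (rule sum_lessThan_split[OF X])
  have swap: "(\<Sum>i\<in>Y. \<Sum>j\<in>X. a i j) = (\<Sum>i\<in>X. \<Sum>j\<in>Y. a i j)"
    using X by (subst sum.swap) (intro sum.cong refl, auto simp: Y_def intro: a_sym)
  show "(\<Sum>i\<in>X. \<Sum>j\<in>{..<n} - X. a i j) = (\<Sum>i\<in>X. \<Sum>j<n. a i j) - (\<Sum>i\<in>X. \<Sum>j\<in>X. a i j)"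
    unfolding rows Y_def[symmetric] sum.distrib by simp
  moreover have "(\<Sum>i<n. \<Sum>j<n. a i j) = (\<Sum>i\<in>X. \<Sum>j<n. a i j) + (\<Sum>i\<in>Y. \<Sum>j<n. a i j)"
    unfolding Y_def by (rule sum_lessThan_split[OF X])
  ultimately show "(\<Sum>i\<in>{..<n} - X. \<Sum>j\<in>{..<n} - X. a i j)
       = (\<Sum>i<n. \<Sum>j<n. a i j) - 2 * (\<Sum>i\<in>X. \<Sum>j<n. a i j) + (\<Sum>i\<in>X. \<Sum>j\<in>X. a i j)"
    unfolding rows Y_def[symmetric] sum.distrib swap by simp
qed

text \<open>The weighted 2x2 problem \<open>S y = l W y\<close> with \<open>S = [[s11, s12], [s12, s22]]\<close> and
  \<open>W = diag p q\<close> has a nonzero solution whenever \<open>det (S - l W) = 0\<close>.\<close>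

lemma weighted_2x2_eigenvector:
  fixes p q s11 s12 s22 l :: real
  assumes p: "p > 0" and q: "q > 0"
    and det: "(p*q) * l^2 - (q*s11 + p*s22) * l - (s12^2 - s11*s22) = 0"
  obtains y1 y2 where "p*y1^2 + q*y2^2 > 0"
    and "s11*y1^2 + 2*s12*y1*y2 + s22*y2^2 = l * (p*y1^2 + q*y2^2)"
proof -
  define \<alpha> where "\<alpha> = s11 - l*p"
  define \<beta> where "\<beta> = s22 - l*q"
  have ab: "\<alpha> * \<beta> = s12^2" using det unfolding \<alpha>_def \<beta>_def
    by (simp add: algebra_simps power2_eq_square)
  obtain y1 y2 where y: "y1 \<noteq> 0 \<or> y2 \<noteq> 0" "s11*y1 + s12*y2 = l*p*y1" "s12*y1 + s22*y2 = l*q*y2"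
  proof (cases "s12 = 0 \<and> \<alpha> = 0")
    case True
    then show ?thesis using that[of 1 0] unfolding \<alpha>_def by simp
  next
    case False
    then have "s12 \<noteq> 0 \<or> - \<alpha> \<noteq> 0" by simp
    moreover have "s11*s12 + s12*(-\<alpha>) = l*p*s12" unfolding \<alpha>_def by (simp add: algebra_simps)
    moreover have "s12*s12 + s22*(-\<alpha>) - l*q*(-\<alpha>) = s12^2 - \<alpha>*\<beta>" unfolding \<beta>_def
      by (simp add: algebra_simps power2_eq_square)
    then have "s12*s12 + s22*(-\<alpha>) = l*q*(-\<alpha>)" using ab by simp
    ultimately show ?thesis by (rule that)
  qed
  have "p*y1^2 > 0 \<or> q*y2^2 > 0" using y(1) p q by auto
  then have "p*y1^2 + q*y2^2 > 0" using p q by (auto intro: add_pos_nonneg add_nonneg_pos)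
  moreover have "s11*y1^2 + 2*s12*y1*y2 + s22*y2^2 = y1*(s11*y1 + s12*y2) + y2*(s12*y1 + s22*y2)"
    by (simp add: algebra_simps power2_eq_square)
  then have "s11*y1^2 + 2*s12*y1*y2 + s22*y2^2 = l * (p*y1^2 + q*y2^2)"
    using y by (simp add: algebra_simps power2_eq_square)
  ultimately show thesis by (rule that)
qed

lemma quadratic_root:
  fixes a b c \<sigma> :: real
  assumes c: "c > 0" and disc: "a^2 + 4*b*c \<ge> 0" and \<sigma>: "\<sigma>^2 = 1"
  defines "x \<equiv> (a + \<sigma> * sqrt (a^2 + 4*b*c)) / (2*c)"
  shows "c * x^2 - a * x - b = 0"
proof -
  define r where "r = sqrt (a^2 + 4*b*c)"
  have "r^2 = a^2 + 4*b*c" unfolding r_def by (rule real_sqrt_pow2[OF disc])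
  then have "(\<sigma>*r)^2 = a^2 + 4*b*c" using \<sigma> by (simp add: power_mult_distrib)
  moreover have "c * x^2 - a * x - b = ((\<sigma>*r)^2 - a^2 - 4*b*c) / (4*c)"
    unfolding x_def r_def[symmetric] using c by (simp add: field_simps power2_eq_square)
  ultimately show ?thesis by simp
qed

lemma quotient_roots_bound_spectrum:
  fixes a :: "nat \<Rightarrow> nat \<Rightarrow> real" and n :: nat and X :: "nat set"
  defines "M \<equiv> mat n n (\<lambda>(i, j). a i j)"
    and "p \<equiv> real (card X)" and "q \<equiv> real (n - card X)"
    and "s11 \<equiv> \<Sum>i\<in>X. \<Sum>j\<in>X. a i j" and "s12 \<equiv> \<Sum>i\<in>X. \<Sum>j\<in>{..<n} - X. a i j"
    and "s22 \<equiv> \<Sum>i\<in>{..<n} - X. \<Sum>j\<in>{..<n} - X. a i j"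
  defines "A \<equiv> q * s11 + p * s22" and "B \<equiv> s12^2 - s11 * s22" and "C \<equiv> p * q"
  assumes a_sym: "\<And>i j. i < n \<Longrightarrow> j < n \<Longrightarrow> a i j = a j i"
    and X: "X \<subseteq> {..<n}" "X \<noteq> {}" "card X < n"
  shows "(A + sqrt (A^2 + 4*B*C)) / (2*C) \<le> Max {k. eigenvalue M k}"
    and "Min {k. eigenvalue M k} \<le> (A - sqrt (A^2 + 4*B*C)) / (2*C)"
proof -
  have "finite X" using X(1) finite_subset by blast
  then have p: "p > 0" and q: "q > 0" using X by (auto simp: p_def q_def card_gt_0_iff)
  have n: "n > 0" using X(3) by simp
  have within: "Min {k. eigenvalue M k} \<le> l \<and> l \<le> Max {k. eigenvalue M k}"
    if root: "C * l^2 - A * l - B = 0" for l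
  proof -
    have det: "(p*q) * l^2 - (q*s11 + p*s22) * l - (s12^2 - s11*s22) = 0"
      using root by (simp add: A_def B_def C_def)
    obtain y1 y2 where pos: "p*y1^2 + q*y2^2 > 0"
      and eq: "s11*y1^2 + 2*s12*y1*y2 + s22*y2^2 = l * (p*y1^2 + q*y2^2)"
      by (rule weighted_2x2_eigenvector[OF p q det])
    define f where "f i = (if i \<in> X then y1 else y2)" for i
    have nf: "sq_norm n f = p*y1^2 + q*y2^2"
      unfolding f_def p_def q_def by (rule sq_norm_two_valued[OF X(1)])
    have qf: "quad_form a n f = l * sq_norm n f"
      unfolding nf eq[symmetric] f_def s11_def s12_def s22_def
      by (rule quad_form_two_valued[OF a_sym X(1)])
    show ?thesis
      using min_eigenvalue_le_quad_form[where a=a and n=n and f=f, OF a_sym n]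
        quad_form_le_max_eigenvalue[where a=a and n=n and f=f, OF a_sym n] pos
      unfolding qf nf M_def by simp
  qed
  have "A^2 + 4*B*C = (q*s11 - p*s22)^2 + 4*p*q*s12^2"
    by (simp add: A_def B_def C_def algebra_simps power2_eq_square)
  then have disc: "A^2 + 4*B*C \<ge> 0" using p q by simp
  have C: "C > 0" using p q by (simp add: C_def)
  show "(A + sqrt (A^2 + 4*B*C)) / (2*C) \<le> Max {k. eigenvalue M k}"
    using within quadratic_root[OF C disc, of 1] by simp
  show "Min {k. eigenvalue M k} \<le> (A - sqrt (A^2 + 4*B*C)) / (2*C)"
    using within quadratic_root[OF C disc, of "-1"] by simp
qed

section \<open>Distances around a vertex of a bipartite graph\<close>

lemma gdist_self: "gdist E u u = 0"
  unfolding gdist_def by (rule Least_eq_0) (rule exI[of _ "[u]"], simp add: is_walk_def)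

lemma is_walk_rev:
  assumes "simple_graph n E" and "is_walk E xs"
  shows "is_walk E (rev xs)"
  unfolding is_walk_def
proof (intro conjI allI impI)
  show "rev xs \<noteq> []" using assms(2) by (simp add: is_walk_def)
  fix i assume i: "Suc i < length (rev xs)"
  define m where "m = length xs - Suc (Suc i)"
  have "E (xs ! m) (xs ! Suc m)" using assms(2) i by (simp add: is_walk_def m_def)
  then have "E (xs ! Suc m) (xs ! m)" using assms(1) by (simp add: simple_graph_def)
  moreover have "rev xs ! i = xs ! Suc m" "rev xs ! Suc i = xs ! m"
    using i by (simp_all add: rev_nth m_def Suc_diff_Suc)
  ultimately show "E (rev xs ! i) (rev xs ! Suc i)" by simp
qed

lemma gdist_commute:
  assumes "simple_graph n E"
  shows "gdist E u v = gdist E v u"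
proof -
  have "\<exists>ys. is_walk E ys \<and> length ys = Suc k \<and> hd ys = v \<and> last ys = u"
    if "is_walk E xs" "length xs = Suc k" "hd xs = u" "last xs = v" for xs k u v
    using that is_walk_rev[OF assms, of xs]
    by (intro exI[of _ "rev xs"]) (auto simp: hd_rev last_rev is_walk_def)
  then have "(\<exists>xs. is_walk E xs \<and> length xs = Suc k \<and> hd xs = u \<and> last xs = v)
      \<longleftrightarrow> (\<exists>xs. is_walk E xs \<and> length xs = Suc k \<and> hd xs = v \<and> last xs = u)" for k
    by blast
  then show ?thesis unfolding gdist_def by simp
qed

lemma gdist_adjacent:
  assumes "simple_graph n E" and "E u v"
  shows "gdist E u v = 1"
  unfolding gdist_def
proof (rule Least_equality)
  show "\<exists>xs. is_walk E xs \<and> length xs = Suc 1 \<and> hd xs = u \<and> last xs = v"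
    using assms(2) by (intro exI[of _ "[u, v]"]) (auto simp: is_walk_def)
  have "u \<noteq> v" using assms by (auto simp: simple_graph_def)
  then show "1 \<le> k" if "\<exists>xs. is_walk E xs \<and> length xs = Suc k \<and> hd xs = u \<and> last xs = v" for k
    using that by (cases k) (auto simp: length_Suc_conv)
qed

lemma gdist_common_neighbour:
  assumes sg: "simple_graph n E" and "bipartite_graph n E"
    and "E v u" and "E v w" and "u \<noteq> w"
  shows "gdist E u w = 2"
  unfolding gdist_def
proof (rule Least_equality)
  have "E u v" using sg \<open>E v u\<close> by (auto simp: simple_graph_def)
  then have "is_walk E [u, v, w]" using \<open>E v w\<close> by (auto simp: is_walk_def less_Suc_eq)
  then show "\<exists>xs. is_walk E xs \<and> length xs = Suc 2 \<and> hd xs = u \<and> last xs = w"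
    by (intro exI[of _ "[u, v, w]"]) auto
  obtain A where A: "\<forall>a<n. \<forall>b<n. E a b \<longrightarrow> (a \<in> A \<longleftrightarrow> b \<notin> A)"
    using assms(2) by (auto simp: bipartite_graph_def)
  have "u < n" "v < n" "w < n" using sg assms(3,4) by (auto simp: simple_graph_def)
  then have "\<not> E u w" using A assms(3,4) by metis
  show "2 \<le> k" if walk: "\<exists>xs. is_walk E xs \<and> length xs = Suc k \<and> hd xs = u \<and> last xs = w" for k
  proof -
    obtain xs where xs: "is_walk E xs" "length xs = Suc k" "hd xs = u" "last xs = w"
      using walk by blast
    have "k \<noteq> 0" using xs \<open>u \<noteq> w\<close> by (auto simp: length_Suc_conv)
    moreover have "k \<noteq> 1" using xs \<open>\<not> E u w\<close>
      by (auto simp: length_Suc_conv is_walk_def)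
    ultimately show ?thesis by simp
  qed
qed

lemma transmission_eq_row_sum:
  assumes "v < n"
  shows "transmission n E v = (\<Sum>j<n. real (gdist E v j))"
proof -
  have "(\<Sum>j<n. real (gdist E v j)) = real (gdist E v v) + (\<Sum>j\<in>{0..<n} - {v}. real (gdist E v j))"
    using assms by (simp add: lessThan_atLeast0 sum.remove)
  then show ?thesis by (simp add: transmission_def gdist_self)
qed

lemma neighbourhood_transmission_sum:
  "(\<Sum>u\<in>{u. u < n \<and> E v u}. transmission n E u) = real (degree n E v) * tval n E v"
proof (cases "degree n E v = 0")
  case True
  then have empty: "{u. u < n \<and> E v u} = {}" by (simp add: degree_def)
  show ?thesis unfolding empty using True by simp
qed (simp add: tval_def)

lemma closed_neighbourhood_distance_sum:
  fixes v :: nat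
  assumes sg: "simple_graph n E" and bp: "bipartite_graph n E"
  defines "N \<equiv> {u. u < n \<and> E v u}"
  shows "(\<Sum>i\<in>insert v N. \<Sum>j\<in>insert v N. real (gdist E i j)) = 2 * real (degree n E v)^2"
proof -
  define \<Delta> where "\<Delta> = real (degree n E v)"
  have N: "finite N" "v \<notin> N" "real (card N) = \<Delta>"
    using sg by (auto simp: N_def \<Delta>_def degree_def simple_graph_def)
  have adj: "gdist E v u = 1" "gdist E u v = 1" if "u \<in> N" for u
    using that gdist_adjacent[OF sg, of v u] gdist_commute[OF sg, of u v] by (auto simp: N_def)
  have row_v: "(\<Sum>j\<in>insert v N. real (gdist E v j)) = \<Delta>"
    using N adj(1) by (simp add: gdist_self)
  have row_u: "(\<Sum>j\<in>insert v N. real (gdist E u j)) = 2 * \<Delta> - 1" if u: "u \<in> N" for u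
  proof -
    have "(\<Sum>j\<in>N. real (gdist E u j)) = (\<Sum>j\<in>N. 2 - (if j = u then 2 else 0))"
      using gdist_common_neighbour[OF sg bp, of v u] u
      by (intro sum.cong refl) (auto simp: N_def gdist_self)
    also have "\<dots> = 2 * \<Delta> - 2" using N u by (simp add: sum_subtractf)
    finally show ?thesis using N adj(2)[OF u] by simp
  qed
  have "(\<Sum>i\<in>insert v N. \<Sum>j\<in>insert v N. real (gdist E i j)) = \<Delta> + \<Delta> * (2 * \<Delta> - 1)"
    using N row_v row_u by simp
  then show ?thesis by (simp add: \<Delta>_def power2_eq_square algebra_simps)
qed

lemma distance_spectrum_vertex_bound:
  fixes n :: nat and E :: "nat \<Rightarrow> nat \<Rightarrow> bool" and v :: nat
  defines "\<Delta> \<equiv> real (degree n E v)" and "S \<equiv> \<Sum>j<n. transmission n E j"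
  defines "a \<equiv> (\<Delta> + 1) * (S - 2 * transmission n E v - 2 * tval n E v * \<Delta>) + 2 * real n * \<Delta>^2"
    and "b \<equiv> (transmission n E v)^2 - 2 * S * \<Delta>^2 + 2 * transmission n E v * tval n E v * \<Delta>
             + (tval n E v)^2 * \<Delta>^2"
    and "c \<equiv> (1 + \<Delta>) * (real n - \<Delta> - 1)"
  assumes sg: "simple_graph n E" and bp: "bipartite_graph n E" and v: "v < n"
    and deg: "degree n E v \<le> n - 2" and n: "n \<ge> 3"
  shows "(a + sqrt (a^2 + 4 * b * c)) / (2 * c) \<le> rhoD n E"
    and "rhoD_min n E \<le> (a - sqrt (a^2 + 4 * b * c)) / (2 * c)"
proof -
  define d where "d i j = real (gdist E i j)" for i j
  define N where "N = {u. u < n \<and> E v u}"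
  define X where "X = insert v N"
  have d_sym: "d i j = d j i" for i j using gdist_commute[OF sg] by (simp add: d_def)
  have N: "finite N" "v \<notin> N" "card N = degree n E v"
    using sg by (auto simp: N_def degree_def simple_graph_def)
  have X: "X \<subseteq> {..<n}" "X \<noteq> {}" "card X = degree n E v + 1"
    using v N by (auto simp: X_def N_def)
  have rows: "(\<Sum>j<n. d i j) = transmission n E i" if "i < n" for i
    using transmission_eq_row_sum[OF that] by (simp add: d_def)
  have TX: "(\<Sum>i\<in>X. \<Sum>j<n. d i j) = transmission n E v + \<Delta> * tval n E v"
    using X(1) N rows neighbourhood_transmission_sum[of n E v]
    by (simp add: X_def N_def[symmetric] \<Delta>_def subset_iff)
  have total: "(\<Sum>i<n. \<Sum>j<n. d i j) = S" using rows by (simp add: S_def)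
  have s11: "(\<Sum>i\<in>X. \<Sum>j\<in>X. d i j) = 2 * \<Delta>^2"
    using closed_neighbourhood_distance_sum[OF sg bp, of v] by (simp add: X_def N_def d_def \<Delta>_def)
  note s12 = block_sums_by_row_sums(1)[where a=d and n=n, OF d_sym X(1)]
  note s22 = block_sums_by_row_sums(2)[where a=d and n=n, OF d_sym X(1)]
  have "dist_matrix n E = mat n n (\<lambda>(i, j). d i j)" by (simp add: dist_matrix_def d_def)
  moreover have "real (card X) = 1 + \<Delta>" "real (n - card X) = real n - \<Delta> - 1"
    using X(3) deg n by (auto simp: \<Delta>_def)
  moreover have "card X < n" using X(3) deg n by simp
  ultimately show "(a + sqrt (a^2 + 4 * b * c)) / (2 * c) \<le> rhoD n E"
    and "rhoD_min n E \<le> (a - sqrt (a^2 + 4 * b * c)) / (2 * c)"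
    using quotient_roots_bound_spectrum[where a=d and n=n and X=X, OF d_sym X(1,2)]
    unfolding rhoD_def rhoD_min_def s12 s22 s11 TX total
    by (simp_all add: a_def b_def c_def algebra_simps power2_eq_square)
qed

theorem corollary3p3:
  fixes n :: nat and E :: "nat \<Rightarrow> nat \<Rightarrow> bool" and K :: "nat set"
  assumes "simple_graph n E" and "connected_graph n E" and "bipartite_graph n E"
    and "n \<ge> 3" and "max_degree n E \<le> n - 2"
    and "K \<subseteq> {0..<n}" and "K \<noteq> {}"
    and "\<forall>v\<in>K. degree n E v = max_degree n E"
  shows "let \<Delta> = real (max_degree n E);
             S = (\<Sum>j<n. transmission n E j);
             a = (\<lambda>i. (\<Delta> + 1) * (S - 2 * transmission n E i - 2 * tval n E i * \<Delta>)
                        + 2 * real n * \<Delta>^2);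
             b = (\<lambda>i. (transmission n E i)^2 - 2 * S * \<Delta>^2
                        + 2 * transmission n E i * tval n E i * \<Delta> + (tval n E i)^2 * \<Delta>^2);
             c = (1 + \<Delta>) * (real n - \<Delta> - 1)
         in rhoD n E \<ge> Max ((\<lambda>i. (a i + sqrt ((a i)^2 + 4 * b i * c)) / (2 * c)) ` K)
          \<and> rhoD_min n E \<le> Min ((\<lambda>i. (a i - sqrt ((a i)^2 + 4 * b i * c)) / (2 * c)) ` K)"
proof -
  have "finite K" using assms(6) finite_subset by blast
  have vertex: "i < n" "degree n E i \<le> n - 2" "degree n E i = max_degree n E" if "i \<in> K" for i
    using that assms(5,6,8) by auto
  note bounds = distance_spectrum_vertex_bound[OF assms(1,3) vertex(1,2) assms(4)]
  show ?thesis unfolding Let_def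
    using \<open>finite K\<close> \<open>K \<noteq> {}\<close> bounds vertex(3)
    by (intro conjI Max.boundedI Min.boundedI) auto
qed

end
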